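(* Let $R$ be a finite chain ring and let $C\subseteq R^n$ be a nonzero $R$-linear code of length $n$, rank $K$, locality $r\ge 1$ and minimum distance $d$. Then $$d\le n-K-\left\lceil\frac{K}{r}\right\rceil+2.$$
   Context: A finite chain ring is a finite commutative local ring whose ideals are totally ordered by inclusion. An $R$-linear code is an $R$-submodule $C\subseteq R^n$. The rank of $C$ is the minimum $K$ such that there is an $R$-module monomorphism $C\to R^K$. A coordinate $i$ has locality $r$ if there is $S_i\subseteq\{1,\dots,n\}\setminus\{i\}$ with $|S_i|\le r$ and $|C_{S_i}|=|C_{S_i\cup\{i\}}|$, where $C_S$ is the code punctured to the coordinates in $S$; $C$ has locality $r$ if every coordinate does. $d$ is the minimum Hamming weight of a nonzero codeword. *)

theory Defs
  imports Complex_Main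
begin

definition is_ideal :: "'a::comm_ring_1 set \<Rightarrow> bool" where
  "is_ideal I \<longleftrightarrow> 0 \<in> I \<and> (\<forall>x\<in>I. \<forall>y\<in>I. x + y \<in> I) \<and> (\<forall>x\<in>I. \<forall>a. a * x \<in> I)"

definition maximal_ideal :: "'a::comm_ring_1 set \<Rightarrow> bool" where
  "maximal_ideal I \<longleftrightarrow> is_ideal I \<and> I \<noteq> UNIV \<and>
     (\<forall>J. is_ideal J \<and> I \<subseteq> J \<and> J \<noteq> UNIV \<longrightarrow> J = I)"

definition finite_chain_ring :: "'a::comm_ring_1 itself \<Rightarrow> bool" where
  "finite_chain_ring (_ :: 'a itself) \<longleftrightarrow>
     finite (UNIV :: 'a set) \<and>
     (\<exists>!I :: 'a set. maximal_ideal I) \<and>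
     (\<forall>I J :: 'a set. is_ideal I \<and> is_ideal J \<longrightarrow> I \<subseteq> J \<or> J \<subseteq> I)"

(* R^n: functions nat => R vanishing outside {0..<n} *)
definition vecs :: "nat \<Rightarrow> (nat \<Rightarrow> 'a::zero) set" where
  "vecs n = {x. \<forall>i\<ge>n. x i = 0}"

definition smult_vec :: "'a::times \<Rightarrow> (nat \<Rightarrow> 'a) \<Rightarrow> (nat \<Rightarrow> 'a)" where
  "smult_vec a x = (\<lambda>i. a * x i)"

definition linear_code :: "nat \<Rightarrow> (nat \<Rightarrow> 'a::comm_ring_1) set \<Rightarrow> bool" where
  "linear_code n C \<longleftrightarrow> C \<subseteq> vecs n \<and> (\<lambda>_. 0) \<in> C \<and>
     (\<forall>x\<in>C. \<forall>y\<in>C. (\<lambda>i. x i + y i) \<in> C) \<and> (\<forall>x\<in>C. \<forall>a. smult_vec a x \<in> C)"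

definition module_hom_to :: "(nat \<Rightarrow> 'a::comm_ring_1) set \<Rightarrow> nat \<Rightarrow> ((nat \<Rightarrow> 'a) \<Rightarrow> (nat \<Rightarrow> 'a)) \<Rightarrow> bool" where
  "module_hom_to C K f \<longleftrightarrow> (\<forall>x\<in>C. f x \<in> vecs K) \<and>
     (\<forall>x\<in>C. \<forall>y\<in>C. f (\<lambda>i. x i + y i) = (\<lambda>i. f x i + f y i)) \<and>
     (\<forall>x\<in>C. \<forall>a. f (smult_vec a x) = smult_vec a (f x))"

definition code_rank :: "(nat \<Rightarrow> 'a::comm_ring_1) set \<Rightarrow> nat" where
  "code_rank C = (LEAST K. \<exists>f. module_hom_to C K f \<and> inj_on f C)"

definition puncture :: "(nat \<Rightarrow> 'a) set \<Rightarrow> nat set \<Rightarrow> (nat \<Rightarrow> 'a option) set" where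
  "puncture C S = (\<lambda>c. (\<lambda>i. if i \<in> S then Some (c i) else None)) ` C"

definition has_locality :: "nat \<Rightarrow> (nat \<Rightarrow> 'a) set \<Rightarrow> nat \<Rightarrow> bool" where
  "has_locality n C r \<longleftrightarrow> (\<forall>i<n. \<exists>S. S \<subseteq> {..<n} - {i} \<and> card S \<le> r \<and>
     card (puncture C S) = card (puncture C (insert i S)))"

definition hweight :: "nat \<Rightarrow> (nat \<Rightarrow> 'a::zero) \<Rightarrow> nat" where
  "hweight n c = card {i. i < n \<and> c i \<noteq> 0}"

definition min_dist :: "nat \<Rightarrow> (nat \<Rightarrow> 'a::zero) set \<Rightarrow> nat" where
  "min_dist n C = Min (hweight n ` (C - {\<lambda>_. 0}))"

end

theory Submission
  imports Defs
begin

text \<open>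
  Call a coordinate \<open>i\<close> forced by a set \<open>A\<close> of coordinates if every codeword vanishing on \<open>A\<close>
  vanishes at \<open>i\<close>. A set with fewer than \<open>K\<close> elements cannot force all \<open>n\<close> coordinates, since
  otherwise restriction to it would embed \<open>C\<close> into a free module of smaller rank. Starting from
  the empty set, locality lets us repeatedly add at most \<open>r\<close> coordinates (a recovery set of an
  unforced coordinate) and gain at least one forced coordinate more than we added; this can be
  done \<open>\<lceil>K/r\<rceil> - 1\<close> times, and padding with unforced coordinates up to size \<open>K - 1\<close> yields
  a set \<open>A\<close> of size \<open>K - 1\<close> forcing at least \<open>K - 1 + \<lceil>K/r\<rceil> - 1\<close> coordinates. Some codeword
  vanishes on all of them but is nonzero, so \<open>d \<le> n - K - \<lceil>K/r\<rceil> + 2\<close>.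
\<close>

definition forced_coords :: "nat \<Rightarrow> (nat \<Rightarrow> 'a::zero) set \<Rightarrow> nat set \<Rightarrow> nat set" where
  "forced_coords n C A = {i. i < n \<and> (\<forall>c\<in>C. (\<forall>a\<in>A. c a = 0) \<longrightarrow> c i = 0)}"

lemma forced_coords_subset: "forced_coords n C A \<subseteq> {..<n}"
  by (auto simp: forced_coords_def)

lemma finite_forced_coords: "finite (forced_coords n C A)"
  by (rule finite_subset[OF forced_coords_subset finite_lessThan])

lemma forced_coords_mono: "A \<subseteq> B \<Longrightarrow> forced_coords n C A \<subseteq> forced_coords n C B"
  by (auto simp: forced_coords_def)

lemma forced_coords_superset: "A \<subseteq> {..<n} \<Longrightarrow> A \<subseteq> forced_coords n C A"
  by (auto simp: forced_coords_def)

lemma forced_coords_trans: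
  "S \<subseteq> forced_coords n C A \<Longrightarrow> forced_coords n C S \<subseteq> forced_coords n C A"
  unfolding forced_coords_def by blast

lemma forced_coords_vanish:
  "c \<in> C \<Longrightarrow> \<forall>a\<in>A. c a = 0 \<Longrightarrow> i \<in> forced_coords n C A \<Longrightarrow> c i = 0"
  by (auto simp: forced_coords_def)

lemma linear_code_zero: "linear_code n C \<Longrightarrow> (\<lambda>_. 0) \<in> C"
  by (simp add: linear_code_def)

lemma linear_code_diff:
  assumes "linear_code n C" "x \<in> C" "y \<in> C"
  shows "(\<lambda>i. x i - y i) \<in> C"
proof -
  have "smult_vec (-1) y \<in> C"
    using assms by (simp add: linear_code_def)
  then have "(\<lambda>i. x i + smult_vec (-1) y i) \<in> C"
    using assms by (simp add: linear_code_def)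
  then show ?thesis
    by (simp add: smult_vec_def)
qed

lemma linear_code_eqI:
  assumes "linear_code n C" "x \<in> C" "y \<in> C" and "\<And>i. i < n \<Longrightarrow> x i = y i"
  shows "x = y"
proof
  fix i
  have "x \<in> vecs n" "y \<in> vecs n"
    using assms(1-3) by (auto simp: linear_code_def)
  then show "x i = y i"
    using assms(4) by (cases "i < n") (auto simp: vecs_def)
qed

lemma finite_linear_code:
  assumes "finite (UNIV :: 'a set)" and "linear_code n (C :: (nat \<Rightarrow> 'a::comm_ring_1) set)"
  shows "finite C"
proof (rule finite_imageD)
  show "inj_on (\<lambda>c. map c [0..<n]) C"
  proof (rule inj_onI)
    fix x y assume "x \<in> C" "y \<in> C" "map x [0..<n] = map y [0..<n]"
    then show "x = y"
      by (intro linear_code_eqI[OF assms(2)]) (simp_all add: map_eq_conv)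
  qed
  have "(\<lambda>c. map c [0..<n]) ` C \<subseteq> {xs. set xs \<subseteq> UNIV \<and> length xs = n}"
    by auto
  then show "finite ((\<lambda>c. map c [0..<n]) ` C)"
    using finite_lists_length_eq[OF assms(1)] by (rule finite_subset)
qed

text \<open>
  If puncturing to \<open>insert i S\<close> and to \<open>S\<close> give equally many words, forgetting the coordinate
  \<open>i\<close> is injective on the punctured code, so a codeword agreeing with \<open>0\<close> on \<open>S\<close> agrees with it
  at \<open>i\<close>.
\<close>
lemma recovery_set_forces:
  assumes "linear_code n C" "finite C" "i < n"
    and "card (puncture C S) = card (puncture C (insert i S))"
  shows "i \<in> forced_coords n C S"
proof -
  define p :: "nat set \<Rightarrow> (nat \<Rightarrow> 'a) \<Rightarrow> nat \<Rightarrow> 'a option" where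
    "p T x = (\<lambda>j. if j \<in> T then Some (x j) else None)" for T x
  define forget where "forget h = (\<lambda>j. if j \<in> S then h j else None)" for h :: "nat \<Rightarrow> 'a option"
  have forget_p: "forget (p (insert i S) x) = p S x" for x
    by (auto simp: forget_def p_def)
  have "forget ` puncture C (insert i S) = puncture C S"
    unfolding puncture_def image_image forget_p[unfolded p_def] by simp
  moreover have "finite (puncture C (insert i S))"
    using assms(2) by (simp add: puncture_def)
  ultimately have inj: "inj_on forget (puncture C (insert i S))"
    using assms(4) by (simp add: inj_on_iff_eq_card)
  have "c i = 0" if c: "c \<in> C" "\<forall>s\<in>S. c s = 0" for c
  proof -
    have "p (insert i S) c \<in> puncture C (insert i S)"
      "p (insert i S) (\<lambda>_. 0) \<in> puncture C (insert i S)"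
      using c(1) linear_code_zero[OF assms(1)] by (auto simp: puncture_def p_def)
    moreover have "forget (p (insert i S) c) = forget (p (insert i S) (\<lambda>_. 0))"
      unfolding forget_p using c(2) by (auto simp: p_def)
    ultimately have "p (insert i S) c = p (insert i S) (\<lambda>_. 0)"
      using inj by (meson inj_onD)
    then show "c i = 0"
      by (auto simp: p_def dest: fun_cong[of _ _ i])
  qed
  then show ?thesis
    using assms(3) by (simp add: forced_coords_def)
qed

lemma code_rank_le_card_if_forces_all:
  assumes lc: "linear_code n (C :: (nat \<Rightarrow> 'a::comm_ring_1) set)"
    and "finite A" and all: "{..<n} \<subseteq> forced_coords n C A"
  shows "code_rank C \<le> card A"
proof -
  define e where "e = sorted_list_of_set A"
  have e: "set e = A" "length e = card A"
    using \<open>finite A\<close> by (auto simp: e_def)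
  define f where "f c = (\<lambda>k. if k < card A then c (e ! k) else 0)" for c :: "nat \<Rightarrow> 'a"
  have "module_hom_to C (card A) f"
    unfolding module_hom_to_def by (auto simp: f_def vecs_def smult_vec_def)
  moreover have "inj_on f C"
  proof (rule inj_onI)
    fix x y assume xy: "x \<in> C" "y \<in> C" "f x = f y"
    have "x a - y a = 0" if "a \<in> A" for a
    proof -
      obtain k where "k < card A" "e ! k = a"
        using e \<open>a \<in> A\<close> by (metis in_set_conv_nth)
      then show ?thesis
        using fun_cong[OF xy(3), of k] by (simp add: f_def)
    qed
    then have "x i - y i = 0" if "i < n" for i
      using forced_coords_vanish[OF linear_code_diff[OF lc xy(1,2)]] all that by blast
    then show "x = y"
      using linear_code_eqI[OF lc xy(1,2)] by simp
  qed
  ultimately show ?thesis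
    unfolding code_rank_def by (blast intro: Least_le)
qed

lemma exists_unforced_coord:
  assumes "linear_code n C" "A \<subseteq> {..<n}" "card A < code_rank C"
  shows "\<exists>i<n. i \<notin> forced_coords n C A"
proof (rule ccontr)
  assume "\<not> ?thesis"
  then have "{..<n} \<subseteq> forced_coords n C A"
    by auto
  with code_rank_le_card_if_forces_all[OF assms(1) finite_subset[OF assms(2) finite_lessThan]]
  show False
    using assms(3) by simp
qed

text \<open>
  One greedy step: add the not yet forced part \<open>D\<close> of a recovery set of an unforced coordinate
  \<open>i\<close>. All of \<open>D\<close> and \<open>i\<close> become forced, so the forced set grows by more than \<open>card D \<le> r\<close>.
\<close>
lemma locality_extends_forced_coords:
  assumes lc: "linear_code n C" and "finite C" and loc: "has_locality n C r"
    and A: "A \<subseteq> {..<n}" and i: "i < n" "i \<notin> forced_coords n C A"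
  obtains A' where "A' \<subseteq> {..<n}" "card A' \<le> card A + r"
    "card A' + card (forced_coords n C A) < card A + card (forced_coords n C A')"
proof -
  obtain S where S: "S \<subseteq> {..<n} - {i}" "card S \<le> r"
    "card (puncture C S) = card (puncture C (insert i S))"
    using loc i(1) unfolding has_locality_def by blast
  define D where "D = S - forced_coords n C A"
  define A' where "A' = A \<union> D"
  have "finite S"
    using S(1) finite_subset by blast
  then have "finite D" "card D \<le> r"
    using S(2) card_mono[of S D] by (auto simp: D_def)
  have A': "A' \<subseteq> {..<n}"
    using A S(1) by (auto simp: A'_def D_def)
  have old: "forced_coords n C A \<subseteq> forced_coords n C A'"
    by (rule forced_coords_mono) (auto simp: A'_def)
  moreover have "D \<subseteq> forced_coords n C A'"
    using forced_coords_superset[OF A'] by (auto simp: A'_def)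
  moreover have "i \<in> forced_coords n C A'"
  proof -
    have "S \<subseteq> forced_coords n C A'"
      using old \<open>D \<subseteq> forced_coords n C A'\<close> by (auto simp: D_def)
    then have "forced_coords n C S \<subseteq> forced_coords n C A'"
      by (rule forced_coords_trans)
    then show ?thesis
      using recovery_set_forces[OF lc \<open>finite C\<close> i(1) S(3)] by blast
  qed
  ultimately have "insert i (forced_coords n C A \<union> D) \<subseteq> forced_coords n C A'"
    by blast
  then have "card (insert i (forced_coords n C A \<union> D)) \<le> card (forced_coords n C A')"
    by (rule card_mono[OF finite_forced_coords])
  moreover have "card (insert i (forced_coords n C A \<union> D)) = card (forced_coords n C A) + card D + 1"
  proof -
    have "forced_coords n C A \<inter> D = {}" "i \<notin> forced_coords n C A \<union> D"
      using i(2) S(1) by (auto simp: D_def)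
    then show ?thesis
      using \<open>finite D\<close> finite_forced_coords[of n C A] by (simp add: card_Un_disjoint)
  qed
  moreover have "card A' \<le> card A + card D"
    unfolding A'_def by (rule card_Un_le)
  ultimately show ?thesis
    using that[OF A'] \<open>card D \<le> r\<close> by linarith
qed

lemma locality_forces_many_coords:
  assumes "linear_code n C" "finite C" "has_locality n C r" "r * j < code_rank C"
  shows "\<exists>A\<subseteq>{..<n}. card A \<le> r * j \<and> card A + j \<le> card (forced_coords n C A)"
  using assms(4)
proof (induction j)
  case 0
  show ?case by (intro exI[of _ "{}"]) auto
next
  case (Suc j)
  then obtain A where A: "A \<subseteq> {..<n}" "card A \<le> r * j" "card A + j \<le> card (forced_coords n C A)"
    by auto
  obtain i where "i < n" "i \<notin> forced_coords n C A"
    using exists_unforced_coord[OF assms(1) A(1)] A(2) Suc.prems by fastforce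
  then obtain A' where A': "A' \<subseteq> {..<n}" "card A' \<le> card A + r"
    "card A' + card (forced_coords n C A) < card A + card (forced_coords n C A')"
    using locality_extends_forced_coords[OF assms(1-3) A(1)] by blast
  have "card A' \<le> r * Suc j" "card A' + Suc j \<le> card (forced_coords n C A')"
    using A(2,3) A'(2,3) by simp_all
  with A'(1) show ?case by blast
qed

lemma pad_forcing_set:
  assumes "linear_code n C" "A \<subseteq> {..<n}" "card A \<le> m" "m < code_rank C"
    and "card A + j \<le> card (forced_coords n C A)"
  shows "\<exists>A'\<subseteq>{..<n}. card A' = m \<and> m + j \<le> card (forced_coords n C A')"
  using assms(2-5)
proof (induction "m - card A" arbitrary: A)
  case 0
  then show ?case by (intro exI[of _ A]) auto
next
  case (Suc k)
  obtain i where i: "i < n" "i \<notin> forced_coords n C A"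
    using exists_unforced_coord[OF assms(1) Suc.prems(1)] Suc.prems(2,3) by fastforce
  have "i \<notin> A"
    using i(2) forced_coords_superset[OF Suc.prems(1)] by blast
  then have card_iA: "card (insert i A) = card A + 1"
    using finite_subset[OF Suc.prems(1) finite_lessThan] by simp
  have "insert i (forced_coords n C A) \<subseteq> forced_coords n C (insert i A)"
    using forced_coords_mono[of A "insert i A" n C] forced_coords_superset[of "insert i A" n C]
      i(1) Suc.prems(1) by auto
  then have "card (insert i (forced_coords n C A)) \<le> card (forced_coords n C (insert i A))"
    by (rule card_mono[OF finite_forced_coords])
  then have grow: "card (forced_coords n C A) + 1 \<le> card (forced_coords n C (insert i A))"
    using i(2) finite_forced_coords[of n C A] by simp
  show ?case
  proof (rule Suc.hyps(1))
    show "k = m - card (insert i A)" "card (insert i A) \<le> m"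
      using Suc.hyps(2) card_iA by simp_all
    show "insert i A \<subseteq> {..<n}"
      using Suc.prems(1) i(1) by simp
    show "m < code_rank C"
      by (rule Suc.prems(3))
    show "card (insert i A) + j \<le> card (forced_coords n C (insert i A))"
      using Suc.prems(4) card_iA grow by simp
  qed
qed

lemma min_dist_le_if_vanishing:
  assumes "finite C" "c \<in> C" "c \<noteq> (\<lambda>_. 0)" "T \<subseteq> {..<n}" "\<forall>t\<in>T. c t = 0"
  shows "min_dist n C \<le> n - card T"
proof -
  have "min_dist n C \<le> hweight n c"
    unfolding min_dist_def using assms(1-3) by (intro Min_le) auto
  also have "\<dots> \<le> card ({..<n} - T)"
    unfolding hweight_def using assms(5) by (intro card_mono) auto
  also have "\<dots> = n - card T"
    using assms(4) by (simp add: card_Diff_subset finite_subset)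
  finally show ?thesis .
qed

lemma min_dist_add_card_forced_coords_le:
  assumes "linear_code n C" "finite C" "A \<subseteq> {..<n}" "card A < code_rank C"
  shows "min_dist n C + card (forced_coords n C A) \<le> n"
proof -
  obtain i where "i < n" "i \<notin> forced_coords n C A"
    using exists_unforced_coord[OF assms(1,3,4)] by blast
  then obtain c where c: "c \<in> C" "\<forall>a\<in>A. c a = 0" "c \<noteq> (\<lambda>_. 0)"
    by (auto simp: forced_coords_def)
  have "min_dist n C \<le> n - card (forced_coords n C A)"
    using min_dist_le_if_vanishing[OF assms(2) c(1,3) forced_coords_subset]
      forced_coords_vanish[OF c(1,2)] by blast
  moreover have "card (forced_coords n C A) \<le> n"
    using card_mono[OF finite_lessThan forced_coords_subset] by simp
  ultimately show ?thesis
    by linarith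
qed

lemma exists_forcing_set_of_size_rank_minus_one:
  assumes "linear_code n C" "finite C" "has_locality n C r" "r * j < code_rank C"
  shows "\<exists>A\<subseteq>{..<n}. card A = code_rank C - 1 \<and> code_rank C - 1 + j \<le> card (forced_coords n C A)"
proof -
  obtain A where A: "A \<subseteq> {..<n}" "card A \<le> r * j" "card A + j \<le> card (forced_coords n C A)"
    using locality_forces_many_coords[OF assms] by blast
  have "card A \<le> code_rank C - 1" "code_rank C - 1 < code_rank C"
    using A(2) assms(4) by simp_all
  then show ?thesis
    using pad_forcing_set[OF assms(1) A(1) _ _ A(3)] by blast
qed

lemma ceiling_divide_eq_Suc:
  assumes "0 < r" "0 < K"
  obtains j :: nat where "\<lceil>real K / real r\<rceil> = int j + 1" "r * j < K"
proof
  define j where "j = nat (\<lceil>real K / real r\<rceil> - 1)"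
  show ceil: "\<lceil>real K / real r\<rceil> = int j + 1"
    using assms by (simp add: j_def)
  have "real (r * j) < real K"
    using ceiling_divide_lower[of "real r" "real K"] ceil assms(1) by (simp add: mult.commute)
  then show "r * j < K"
    by (simp only: of_nat_less_iff)
qed

theorem mainTheorem3:
  fixes C :: "(nat \<Rightarrow> 'a::comm_ring_1) set" and n r :: nat
  assumes "finite_chain_ring TYPE('a)"
    and "linear_code n C"
    and "C \<noteq> {\<lambda>_. 0}"
    and "r \<ge> 1"
    and "has_locality n C r"
  shows "int (min_dist n C) \<le> int n - int (code_rank C) - \<lceil>real (code_rank C) / real r\<rceil> + 2"
proof -
  define K where "K = code_rank C"
  have fin: "finite C"
    using assms(1,2) finite_linear_code by (auto simp: finite_chain_ring_def)
  show ?thesis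
  proof (cases "K = 0")
    case True
    obtain c where "c \<in> C" "c \<noteq> (\<lambda>_. 0)"
      using assms(3) linear_code_zero[OF assms(2)] by blast
    then show ?thesis
      using min_dist_le_if_vanishing[OF fin, of c "{}" n] True by (simp add: K_def)
  next
    case False
    then obtain j where ceil: "\<lceil>real K / real r\<rceil> = int j + 1" and "r * j < K"
      using ceiling_divide_eq_Suc[of r K] assms(4) by auto
    then obtain A where "A \<subseteq> {..<n}" "card A = K - 1" "K - 1 + j \<le> card (forced_coords n C A)"
      using exists_forcing_set_of_size_rank_minus_one[OF assms(2) fin assms(5)] by (auto simp: K_def)
    moreover from this have "min_dist n C + card (forced_coords n C A) \<le> n"
      using min_dist_add_card_forced_coords_le[OF assms(2) fin] False by (simp add: K_def)
    ultimately show ?thesis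
      using ceil False by (simp add: K_def)
  qed
qed

end
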